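(* Let $(P_1,\dots,P_J)$ be a stochastically rationalizable stochastic demand system assigning probability zero to patches that lie on more than one budget plane, with vector representation $\pi=(\pi_{-J}',\pi_J')'$. For $k\in\{1,\dots,G\}$ and $z\ge0$ let $F_k(z)=P_J(\{y:y_k\le z\})$. Then $F_k(z)$ is bounded from below by $$\min_{\nu\in\mathbf R^H_+}\Big\{\sum_{i\in\{1,\dots,I_J\}:\ \overline d_k(i|J)\le z}e_i'A_J\nu\Big\}\quad\text{s.t. } A_{-J}\nu=\pi_{-J},$$ and from above by $$\max_{\nu\in\mathbf R^H_+}\Big\{\sum_{i\in\{1,\dots,I_J\}:\ \underline d_k(i|J)\le z}e_i'A_J\nu\Big\}\quad\text{s.t. } A_{-J}\nu=\pi_{-J},$$ where $e_i$ is the $i$-th unit vector of $\mathbf R^{I_J}$.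
   Context: Budget planes $\mathcal B_j=\{y\in\mathbf R^G_+:p_j'y=1\}$, $p_j\in\mathbf R^G_{++}$. Patches are cells of the coarsest partition of $\bigcup_j\mathcal B_j$ such that each cell is, for every $j$, entirely on, strictly above or strictly below $\mathcal B_j$; patches on more than one budget plane are dropped, $x_{1|j},\dots,x_{I_j|j}$ are the remaining patches in $\mathcal B_j$, $I=\sum_jI_j$, with fixed representatives $y^*_{i|j}\in x_{i|j}$. A demand vector $(d_1,\dots,d_J)\in\prod_j\mathcal B_j$ is rationalizable if some strictly increasing $u:\mathbf R^G_+\to\mathbf R$ has $d_j\in\arg\max_{\mathcal B_j}u$ for all $j$. A stochastic demand system $(P_1,\dots,P_J)$ ($P_j$ a probability on $\mathcal B_j$) is stochastically rationalizable if some probability on $\prod_j\mathcal B_j$ concentrated on rationalizable demand vectors has marginals $P_1,\dots,P_J$. Its vector representation $\pi\in\mathbf R^I$ has $j$-th block $(P_j(x_{1|j}),\dots,P_j(x_{I_j|j}))$. $A\in\{0,1\}^{I\times H}$ has as columns (each once) exactly the binary $I$-vectors with one $1$ per block, at position $i_j$ in block $j$, such that $(y^*_{i_1|1},\dots,y^*_{i_J|J})$ is rationalizable. $A_J,\pi_J$ denote rows/entries of block $J$ and $A_{-J},\pi_{-J}$ the rest. $\underline d_k(i|J)=\inf\{y_k:y\in x_{i|J}\}$, $\overline d_k(i|J)=\sup\{y_k:y\in x_{i|J}\}$. *)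

theory Defs
  imports "HOL-Probability.Probability"
begin

text \<open>Goods are indexed by a finite type 'g (so G = CARD('g)); budgets are indexed
  0..J-1, the last budget (J in the paper) is J-1.\<close>

definition nonneg_orthant :: "(real^'g) set" where
  "nonneg_orthant = {y. \<forall>k. 0 \<le> y $ k}"

definition budget :: "(nat \<Rightarrow> real^'g) \<Rightarrow> nat \<Rightarrow> (real^'g) set" where
  "budget p j = {y \<in> nonneg_orthant. p j \<bullet> y = 1}"

definition budget_union :: "(nat \<Rightarrow> real^'g) \<Rightarrow> nat \<Rightarrow> (real^'g) set" where
  "budget_union p J = (\<Union>j<J. budget p j)"

definition position :: "(nat \<Rightarrow> real^'g) \<Rightarrow> nat \<Rightarrow> real^'g \<Rightarrow> nat \<Rightarrow> real" where
  "position p J y = (\<lambda>j. if j < J then sgn (p j \<bullet> y - 1) else 0)"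

text \<open>Cells of the coarsest partition of the union of budget planes such that each
  cell is, for every plane, entirely on, strictly above or strictly below it.\<close>
definition cells :: "(nat \<Rightarrow> real^'g) \<Rightarrow> nat \<Rightarrow> (real^'g) set set" where
  "cells p J = {{y \<in> budget_union p J. position p J y = position p J x} | x. x \<in> budget_union p J}"

definition on_several_planes :: "(nat \<Rightarrow> real^'g) \<Rightarrow> nat \<Rightarrow> (real^'g) set \<Rightarrow> bool" where
  "on_several_planes p J C \<longleftrightarrow>
     (\<exists>j l. j < J \<and> l < J \<and> j \<noteq> l \<and> C \<subseteq> budget p j \<and> C \<subseteq> budget p l)"

definition patches :: "(nat \<Rightarrow> real^'g) \<Rightarrow> nat \<Rightarrow> nat \<Rightarrow> (real^'g) set set" where
  "patches p J j = {C \<in> cells p J. C \<subseteq> budget p j \<and> \<not> on_several_planes p J C}"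

definition strictly_increasing :: "(real^'g \<Rightarrow> real) \<Rightarrow> bool" where
  "strictly_increasing u \<longleftrightarrow>
     (\<forall>x y. x \<in> nonneg_orthant \<and> y \<in> nonneg_orthant \<and> (\<forall>k. x $ k \<le> y $ k) \<and> x \<noteq> y
        \<longrightarrow> u x < u y)"

definition rationalizable :: "(nat \<Rightarrow> real^'g) \<Rightarrow> nat \<Rightarrow> (nat \<Rightarrow> real^'g) \<Rightarrow> bool" where
  "rationalizable p J d \<longleftrightarrow>
     (\<forall>j<J. d j \<in> budget p j) \<and>
     (\<exists>u. strictly_increasing u \<and> (\<forall>j<J. \<forall>y \<in> budget p j. u y \<le> u (d j)))"

definition stoch_demand_system ::
  "(nat \<Rightarrow> real^'g) \<Rightarrow> nat \<Rightarrow> (nat \<Rightarrow> (real^'g) measure) \<Rightarrow> bool" where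
  "stoch_demand_system p J P \<longleftrightarrow>
     (\<forall>j<J. prob_space (P j) \<and> sets (P j) = sets (restrict_space borel (budget p j)))"

definition stoch_rationalizable ::
  "(nat \<Rightarrow> real^'g) \<Rightarrow> nat \<Rightarrow> (nat \<Rightarrow> (real^'g) measure) \<Rightarrow> bool" where
  "stoch_rationalizable p J P \<longleftrightarrow>
     stoch_demand_system p J P \<and>
     (\<exists>Q. prob_space Q \<and> sets Q = sets (PiM {..<J} P) \<and>
          (AE d in Q. rationalizable p J d) \<and>
          (\<forall>j<J. distr Q (P j) (\<lambda>d. d j) = P j))"

text \<open>Columns of A: one patch per budget (a choice function), identified with the
  binary vector having a 1 at that patch in each block, such that the tuple of
  representatives is rationalizable.\<close>
definition columns ::
  "(nat \<Rightarrow> real^'g) \<Rightarrow> nat \<Rightarrow> ((real^'g) set \<Rightarrow> real^'g) \<Rightarrow> (nat \<Rightarrow> (real^'g) set) set" where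
  "columns p J rep = {c. (\<forall>j<J. c j \<in> patches p J j) \<and> (\<forall>j. J \<le> j \<longrightarrow> c j = {}) \<and>
                         rationalizable p J (\<lambda>j. rep (c j))}"

text \<open>Entry of A nu at patch x of block j.\<close>
definition A_times ::
  "(nat \<Rightarrow> (real^'g) set) set \<Rightarrow> ((nat \<Rightarrow> (real^'g) set) \<Rightarrow> real) \<Rightarrow> nat \<Rightarrow> (real^'g) set \<Rightarrow> real" where
  "A_times H \<nu> j x = (\<Sum>c\<in>{c \<in> H. c j = x}. \<nu> c)"

text \<open>nu in R^H_+ with A_{-J} nu = pi_{-J}.\<close>
definition feasible ::
  "(nat \<Rightarrow> real^'g) \<Rightarrow> nat \<Rightarrow> (nat \<Rightarrow> (real^'g) measure) \<Rightarrow> ((real^'g) set \<Rightarrow> real^'g)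
    \<Rightarrow> ((nat \<Rightarrow> (real^'g) set) \<Rightarrow> real) set" where
  "feasible p J P rep =
     {\<nu>. (\<forall>c \<in> columns p J rep. 0 \<le> \<nu> c) \<and> (\<forall>c. c \<notin> columns p J rep \<longrightarrow> \<nu> c = 0) \<and>
          (\<forall>j < J - 1. \<forall>x \<in> patches p J j. A_times (columns p J rep) \<nu> j x = measure (P j) x)}"

end

theory Submission
  imports Defs
begin

text \<open>Let \<open>Q\<close> be a distribution of rationalizable demand vectors with marginals \<open>P j\<close>. Since
  patches on several planes are null, almost every demand lies in a patch, and the tuple of
  patches of a rationalizable vector is a column of \<open>A\<close>: rationalizability depends only on
  the positions of the demands relative to the budget planes, as a truncated Afriat
  construction shows. The weights \<open>\<nu> c = Q{d. d has patch tuple c}\<close> are therefore feasible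
  and reproduce every block of \<open>\<pi>\<close>, the last one included. The patches of the last budget
  lying entirely in \<open>{y. y_k \<le> z}\<close> are contained in that event, which in turn is covered, up
  to a null set, by the patches meeting it; so \<open>F_k(z)\<close> lies between the two sums at this
  \<open>\<nu>\<close>, hence between their infimum and supremum over the feasible set.\<close>

section \<open>Revealed preference and Afriat-type utilities\<close>

lemma inner_strict_mono_pos_weights:
  fixes a x y :: "real^'g"
  assumes "\<forall>g. 0 < a $ g" and "\<forall>g. x $ g \<le> y $ g" and "x \<noteq> y"
  shows "a \<bullet> x < a \<bullet> y"
proof -
  obtain g0 where g0: "x $ g0 \<noteq> y $ g0" using assms(3) by (meson vec_eq_iff)
  have "a \<bullet> y - a \<bullet> x = (\<Sum>g\<in>UNIV. a $ g * (y $ g - x $ g))"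
    by (simp add: inner_vec_def sum_subtractf algebra_simps)
  also have "\<dots> > 0"
  proof (rule sum_pos2[where i=g0])
    show "0 < a $ g0 * (y $ g0 - x $ g0)"
      using assms(1,2) g0 by (simp add: order_less_le)
    show "0 \<le> a $ g * (y $ g - x $ g)" for g
      using assms(1,2) by (simp add: less_imp_le)
  qed auto
  finally show ?thesis by simp
qed

lemma inner_nonneg_orthant:
  fixes a y :: "real^'g"
  assumes "\<forall>g. 0 < a $ g" and "y \<in> nonneg_orthant"
  shows "0 \<le> a \<bullet> y"
  using assms unfolding nonneg_orthant_def inner_vec_def
  by (auto intro!: sum_nonneg simp: less_imp_le)

lemma budget_component_le:
  assumes "\<forall>g. 0 < p j $ g" and "y \<in> budget p j"
  shows "y $ k \<le> 1 / p j $ k"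
proof -
  have "p j $ k * y $ k \<le> (\<Sum>g\<in>UNIV. p j $ g * y $ g)"
    by (rule member_le_sum) (use assms in \<open>auto simp: budget_def nonneg_orthant_def less_imp_le\<close>)
  also have "\<dots> = 1" using assms(2) by (simp add: budget_def inner_vec_def)
  finally show ?thesis using assms(1) by (simp add: field_simps mult.commute)
qed

lemma strictly_increasing_less_max_on_budget:
  fixes p :: "nat \<Rightarrow> real^'g"
  assumes pos: "\<forall>g. 0 < p i $ g" and u: "strictly_increasing u"
    and max: "\<forall>y \<in> budget p i. u y \<le> u b"
    and x: "x \<in> nonneg_orthant" and cheaper: "p i \<bullet> x < 1"
  shows "u x < u b"
proof -
  obtain g0 :: 'g where True by blast
  define t where "t = (1 - p i \<bullet> x) / p i $ g0"
  have "0 < p i $ g0" using pos by simp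
  then have t: "0 < t" using cheaper by (simp add: t_def)
  define y where "y = x + axis g0 t"
  have "y \<in> nonneg_orthant" using x t by (auto simp: y_def nonneg_orthant_def axis_def)
  moreover have "p i \<bullet> y = 1"
    using \<open>0 < p i $ g0\<close> by (simp add: y_def t_def inner_add_right inner_axis)
  ultimately have "u y \<le> u b" using max by (simp add: budget_def)
  moreover have "u x < u y"
  proof -
    have "x \<noteq> y" using t by (simp add: y_def axis_eq_0_iff)
    moreover have "\<forall>g. x $ g \<le> y $ g" using t by (simp add: y_def axis_def)
    ultimately show ?thesis using u x \<open>y \<in> nonneg_orthant\<close> unfolding strictly_increasing_def by blast
  qed
  ultimately show ?thesis by simp
qed

definition affordable_budgets :: "(nat \<Rightarrow> real^'g) \<Rightarrow> nat \<Rightarrow> real^'g \<Rightarrow> nat set" where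
  "affordable_budgets p J y = {i. i < J \<and> p i \<bullet> y \<le> 1}"

text \<open>Only the budgets that afford \<open>y\<close> enter
  the minimum, so no Afriat inequality is needed for the unaffordable ones; \<open>M\<close>, above all
  levels, keeps the utility increasing where no budget is affordable.\<close>
definition afriat_utility ::
  "(nat \<Rightarrow> real^'g) \<Rightarrow> nat \<Rightarrow> (nat \<Rightarrow> real) \<Rightarrow> real \<Rightarrow> real \<Rightarrow> real^'g \<Rightarrow> real" where
  "afriat_utility p J w \<epsilon> M y =
     (if affordable_budgets p J y = {} then M + 1 \<bullet> y
      else Min ((\<lambda>i. w i + \<epsilon> * (p i \<bullet> y - 1)) ` affordable_budgets p J y))"

lemma finite_affordable_budgets: "finite (affordable_budgets p J y)"
  by (simp add: affordable_budgets_def)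

lemma afriat_utility_le:
  assumes "i \<in> affordable_budgets p J y"
  shows "afriat_utility p J w \<epsilon> M y \<le> w i + \<epsilon> * (p i \<bullet> y - 1)"
  using assms finite_affordable_budgets[of p J y] by (auto simp: afriat_utility_def)

lemma afriat_utility_le_level:
  assumes "i < J" and "p i \<bullet> y \<le> 1" and "0 \<le> \<epsilon>"
  shows "afriat_utility p J w \<epsilon> M y \<le> w i"
proof -
  have "afriat_utility p J w \<epsilon> M y \<le> w i + \<epsilon> * (p i \<bullet> y - 1)"
    using assms by (intro afriat_utility_le) (simp add: affordable_budgets_def)
  also have "\<dots> \<le> w i" using assms(2,3) by (simp add: mult_le_0_iff)
  finally show ?thesis .
qed

lemma afriat_utility_attained:
  assumes "affordable_budgets p J y \<noteq> {}"
  obtains i where "i \<in> affordable_budgets p J y"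
    and "afriat_utility p J w \<epsilon> M y = w i + \<epsilon> * (p i \<bullet> y - 1)"
proof -
  let ?f = "\<lambda>i. w i + \<epsilon> * (p i \<bullet> y - 1)"
  have "Min (?f ` affordable_budgets p J y) \<in> ?f ` affordable_budgets p J y"
    using assms finite_affordable_budgets by (intro Min_in) auto
  then show ?thesis using assms that by (auto simp: afriat_utility_def)
qed

lemma afriat_utility_strictly_increasing:
  fixes p :: "nat \<Rightarrow> real^'g"
  assumes pos: "\<forall>j<J. \<forall>g. 0 < p j $ g" and "0 < \<epsilon>" and below_M: "\<forall>i<J. w i < M"
  shows "strictly_increasing (afriat_utility p J w \<epsilon> M)"
  unfolding strictly_increasing_def
proof (intro allI impI, elim conjE)
  fix x y :: "real^'g"
  assume "x \<in> nonneg_orthant" and y: "y \<in> nonneg_orthant"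
    and "\<forall>k. x $ k \<le> y $ k" and "x \<noteq> y"
  then have less: "a \<bullet> x < a \<bullet> y" if "\<forall>g. 0 < a $ g" for a
    using inner_strict_mono_pos_weights that by blast
  let ?v = "afriat_utility p J w \<epsilon> M"
  show "?v x < ?v y"
  proof (cases "affordable_budgets p J y = {}")
    case False
    then obtain i where i: "i \<in> affordable_budgets p J y" "?v y = w i + \<epsilon> * (p i \<bullet> y - 1)"
      by (rule afriat_utility_attained)
    then have "i < J" by (simp add: affordable_budgets_def)
    with i less[of "p i"] pos have "i \<in> affordable_budgets p J x"
      by (auto simp: affordable_budgets_def)
    then have "?v x \<le> w i + \<epsilon> * (p i \<bullet> x - 1)" by (rule afriat_utility_le)
    also have "\<dots> < ?v y" using i(2) less[of "p i"] pos \<open>i < J\<close> \<open>0 < \<epsilon>\<close> by simp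
    finally show ?thesis .
  next
    case y_none: True
    show ?thesis
    proof (cases "affordable_budgets p J x = {}")
      case True
      then show ?thesis using y_none less[of 1] by (simp add: afriat_utility_def)
    next
      case False
      then obtain i where i: "i < J" "p i \<bullet> x \<le> 1" by (auto simp: affordable_budgets_def)
      then have "?v x \<le> w i" using \<open>0 < \<epsilon>\<close> by (intro afriat_utility_le_level) auto
      also have "\<dots> < M" using below_M i by simp
      also have "M \<le> ?v y"
        using y_none inner_nonneg_orthant[of 1 y] y by (simp add: afriat_utility_def)
      finally show ?thesis .
    qed
  qed
qed

lemma afriat_utility_ge_level:
  fixes p :: "nat \<Rightarrow> real^'g"
  assumes pos: "\<forall>i<J. \<forall>g. 0 < p i $ g" and x: "x \<in> nonneg_orthant"
    and strict: "\<forall>i<J. p i \<bullet> x < 1 \<longrightarrow> w j < w i"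
    and weak: "\<forall>i<J. p i \<bullet> x = 1 \<longrightarrow> w j \<le> w i"
    and gap: "\<forall>i<J. w j < w i \<longrightarrow> \<epsilon> \<le> w i - w j"
    and "0 < \<epsilon>" and affordable: "affordable_budgets p J x \<noteq> {}"
  shows "w j \<le> afriat_utility p J w \<epsilon> M x"
proof -
  obtain i where i: "i \<in> affordable_budgets p J x"
    and v: "afriat_utility p J w \<epsilon> M x = w i + \<epsilon> * (p i \<bullet> x - 1)"
    using affordable by (rule afriat_utility_attained)
  have "i < J" and le1: "p i \<bullet> x \<le> 1" using i by (auto simp: affordable_budgets_def)
  have "w j \<le> w i + \<epsilon> * (p i \<bullet> x - 1)"
  proof (cases "p i \<bullet> x < 1")
    case True
    have "0 \<le> \<epsilon> * (p i \<bullet> x)"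
      using inner_nonneg_orthant[of "p i" x] pos x \<open>i < J\<close> \<open>0 < \<epsilon>\<close> by simp
    then show ?thesis using strict gap \<open>i < J\<close> True by (fastforce simp: right_diff_distrib)
  next
    case False
    then show ?thesis using weak le1 \<open>i < J\<close> by simp
  qed
  then show ?thesis using v by simp
qed

lemma rationalizable_of_revealed_levels:
  fixes p :: "nat \<Rightarrow> real^'g" and w :: "nat \<Rightarrow> real"
  assumes pos: "\<forall>i<J. \<forall>g. 0 < p i $ g" and e: "\<forall>j<J. e j \<in> budget p j"
    and strict: "\<forall>i<J. \<forall>j<J. p i \<bullet> e j < 1 \<longrightarrow> w j < w i"
    and weak: "\<forall>i<J. \<forall>j<J. p i \<bullet> e j = 1 \<longrightarrow> w j \<le> w i"
  shows "rationalizable p J e"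
proof -
  define D where "D = {w i - w j | i j. i < J \<and> j < J \<and> w j < w i}"
  have "D \<subseteq> (\<lambda>(i, j). w i - w j) ` ({..<J} \<times> {..<J})" by (auto simp: D_def)
  then have "finite D" by (rule finite_subset) auto
  define \<epsilon> where "\<epsilon> = Min (insert 1 D)"
  have "0 < \<epsilon>" using \<open>finite D\<close> by (auto simp: \<epsilon>_def D_def)
  have gap: "\<epsilon> \<le> w i - w j" if "i < J" "j < J" "w j < w i" for i j
  proof -
    have "w i - w j \<in> D" using that by (auto simp: D_def)
    then show ?thesis using \<open>finite D\<close> by (simp add: \<epsilon>_def)
  qed
  define M where "M = Max (w ` {..<J}) + 1"
  have below_M: "\<forall>i<J. w i < M"
    by (auto simp: M_def intro: le_less_trans[OF Max_ge])
  let ?v = "afriat_utility p J w \<epsilon> M"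
  have "?v y \<le> ?v (e j)" if j: "j < J" and y: "y \<in> budget p j" for j y
  proof -
    have "?v y \<le> w j" using y j \<open>0 < \<epsilon>\<close> by (intro afriat_utility_le_level) (auto simp: budget_def)
    also have "w j \<le> ?v (e j)"
    proof (rule afriat_utility_ge_level[OF pos])
      show "e j \<in> nonneg_orthant" and "affordable_budgets p J (e j) \<noteq> {}"
        using e j by (auto simp: budget_def affordable_budgets_def)
    qed (use strict weak gap j \<open>0 < \<epsilon>\<close> in auto)
    finally show ?thesis .
  qed
  then show ?thesis unfolding rationalizable_def
    using e afriat_utility_strictly_increasing[OF pos \<open>0 < \<epsilon>\<close> below_M] by blast
qed

lemma rationalizable_if_same_positions:
  fixes p :: "nat \<Rightarrow> real^'g"
  assumes pos: "\<forall>i<J. \<forall>g. 0 < p i $ g" and rat: "rationalizable p J d"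
    and e: "\<forall>j<J. e j \<in> budget p j"
    and same: "\<forall>j<J. position p J (e j) = position p J (d j)"
  shows "rationalizable p J e"
proof -
  obtain u where u: "strictly_increasing u" and max: "\<forall>j<J. \<forall>y \<in> budget p j. u y \<le> u (d j)"
    and d: "\<forall>j<J. d j \<in> budget p j"
    using rat unfolding rationalizable_def by blast
  have sgn_eq: "sgn (p i \<bullet> e j - 1) = sgn (p i \<bullet> d j - 1)" if "i < J" "j < J" for i j
    using fun_cong[OF same[rule_format, OF that(2)], of i] that(1) by (simp add: position_def)
  show ?thesis
  proof (rule rationalizable_of_revealed_levels[OF pos e])
    show "\<forall>i<J. \<forall>j<J. p i \<bullet> e j < 1 \<longrightarrow> u (d j) < u (d i)"
    proof (intro allI impI)
      fix i j assume "i < J" "j < J" "p i \<bullet> e j < 1"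
      then have "p i \<bullet> d j < 1" using sgn_eq[of i j] by (auto simp: sgn_if split: if_splits)
      then show "u (d j) < u (d i)"
        using strictly_increasing_less_max_on_budget[OF _ u] pos max d \<open>i < J\<close> \<open>j < J\<close>
        by (auto simp: budget_def)
    qed
    show "\<forall>i<J. \<forall>j<J. p i \<bullet> e j = 1 \<longrightarrow> u (d j) \<le> u (d i)"
    proof (intro allI impI)
      fix i j assume "i < J" "j < J" "p i \<bullet> e j = 1"
      then have "p i \<bullet> d j = 1" using sgn_eq[of i j] by (auto simp: sgn_if split: if_splits)
      then have "d j \<in> budget p i" using d \<open>j < J\<close> by (auto simp: budget_def)
      then show "u (d j) \<le> u (d i)" using max \<open>i < J\<close> by blast
    qed
  qed
qed

section \<open>Cells and patches\<close>

definition cell_of :: "(nat \<Rightarrow> real^'g) \<Rightarrow> nat \<Rightarrow> real^'g \<Rightarrow> (real^'g) set" where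
  "cell_of p J y = {x \<in> budget_union p J. position p J x = position p J y}"

lemma cells_eq_image_cell_of: "cells p J = cell_of p J ` budget_union p J"
  by (auto simp: cells_def cell_of_def)

lemma mem_cell_of_self: "y \<in> budget_union p J \<Longrightarrow> y \<in> cell_of p J y"
  by (simp add: cell_of_def)

lemma cell_eq_cell_of: "C \<in> cells p J \<Longrightarrow> y \<in> C \<Longrightarrow> C = cell_of p J y"
  by (auto simp: cells_eq_image_cell_of cell_of_def)

lemma cell_of_eq_iff_mem:
  assumes "C \<in> cells p J" and "y \<in> budget_union p J"
  shows "cell_of p J y = C \<longleftrightarrow> y \<in> C"
  using assms cell_eq_cell_of mem_cell_of_self by metis

lemma cells_disjoint: "C \<in> cells p J \<Longrightarrow> C' \<in> cells p J \<Longrightarrow> C \<noteq> C' \<Longrightarrow> C \<inter> C' = {}"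
  using cell_eq_cell_of by blast

lemma budget_subset_budget_union: "j < J \<Longrightarrow> budget p j \<subseteq> budget_union p J"
  by (auto simp: budget_union_def)

lemma cell_of_subset_budget:
  assumes "j < J" and "y \<in> budget p j"
  shows "cell_of p J y \<subseteq> budget p j"
proof
  fix x assume x: "x \<in> cell_of p J y"
  then have "x \<in> nonneg_orthant" by (auto simp: cell_of_def budget_union_def budget_def)
  moreover have "sgn (p j \<bullet> x - 1) = sgn (p j \<bullet> y - 1)"
    using x assms(1) by (auto simp: cell_of_def position_def dest: fun_cong[of _ _ j])
  then have "p j \<bullet> x = 1" using assms(2) by (simp add: budget_def sgn_0_0)
  ultimately show "x \<in> budget p j" by (simp add: budget_def)
qed

lemma finite_cells: "finite (cells p J)"
proof -
  let ?ext = "\<lambda>f j. if j < J then f j else (0::real)"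
  have "position p J y = ?ext (restrict (position p J y) {..<J})" for y
    by (auto simp: position_def)
  moreover have "restrict (position p J y) {..<J} \<in> {..<J} \<rightarrow>\<^sub>E {-1, 0, 1}" for y
    by (auto simp: position_def sgn_if)
  ultimately have "range (position p J) \<subseteq> ?ext ` ({..<J} \<rightarrow>\<^sub>E {-1, 0, 1})" by blast
  then have "finite (range (position p J))"
    by (rule finite_subset) (intro finite_imageI finite_PiE; simp)
  moreover have "cells p J \<subseteq> (\<lambda>s. {x \<in> budget_union p J. position p J x = s}) ` range (position p J)"
    by (auto simp: cells_def)
  ultimately show ?thesis by (meson finite_imageI finite_subset)
qed

lemma finite_patches: "finite (patches p J j)"
  using finite_cells by (rule finite_subset[rotated]) (auto simp: patches_def)

lemma finite_columns: "finite (columns p J rep)"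
proof -
  let ?ext = "\<lambda>f j. if j < J then f j else {}"
  have "c = ?ext (restrict c {..<J})" and "restrict c {..<J} \<in> {..<J} \<rightarrow>\<^sub>E cells p J"
    if "c \<in> columns p J rep" for c
    using that by (auto simp: columns_def patches_def fun_eq_iff not_less)
  then have "columns p J rep \<subseteq> ?ext ` ({..<J} \<rightarrow>\<^sub>E cells p J)" by blast
  then show ?thesis by (rule finite_subset) (intro finite_imageI finite_PiE finite_cells; simp)
qed

definition multi_plane_part :: "(nat \<Rightarrow> real^'g) \<Rightarrow> nat \<Rightarrow> nat \<Rightarrow> (real^'g) set" where
  "multi_plane_part p J j = \<Union>{C \<in> cells p J. on_several_planes p J C \<and> C \<subseteq> budget p j}"

lemma cell_of_in_patches:
  assumes "j < J" and "y \<in> budget p j" and "y \<notin> multi_plane_part p J j"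
  shows "cell_of p J y \<in> patches p J j"
proof -
  have "y \<in> budget_union p J" using assms(1,2) budget_subset_budget_union by blast
  then have "cell_of p J y \<in> cells p J" and "y \<in> cell_of p J y"
    by (auto simp: cells_eq_image_cell_of mem_cell_of_self)
  moreover have "cell_of p J y \<subseteq> budget p j" using assms(1,2) by (rule cell_of_subset_budget)
  ultimately show ?thesis
    using assms(3) unfolding patches_def multi_plane_part_def by blast
qed

definition patch_profile :: "(nat \<Rightarrow> real^'g) \<Rightarrow> nat \<Rightarrow> (nat \<Rightarrow> real^'g) \<Rightarrow> nat \<Rightarrow> (real^'g) set" where
  "patch_profile p J d = (\<lambda>j. if j < J then cell_of p J (d j) else {})"

lemma patch_profile_eq_iff:
  assumes "c \<in> columns p J rep" and "\<forall>j<J. d j \<in> budget_union p J"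
  shows "patch_profile p J d = c \<longleftrightarrow> (\<forall>j<J. d j \<in> c j)"
proof -
  have cell: "c j \<in> cells p J" if "j < J" for j
    using assms(1) that by (auto simp: columns_def patches_def)
  have outside: "c j = {}" if "\<not> j < J" for j
    using assms(1) that by (simp add: columns_def)
  show ?thesis
    using assms(2) outside by (auto simp: patch_profile_def fun_eq_iff cell_of_eq_iff_mem cell)
qed

text \<open>Replacing each demand by its patch representative changes no position relative to the
  budget planes, so rationalizability is preserved.\<close>
lemma patch_profile_in_columns:
  fixes p :: "nat \<Rightarrow> real^'g"
  assumes pos: "\<forall>j<J. \<forall>g. 0 < p j $ g" and rep: "\<forall>j<J. \<forall>x \<in> patches p J j. rep x \<in> x"
    and rat: "rationalizable p J d" and in_patches: "\<forall>j<J. cell_of p J (d j) \<in> patches p J j"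
  shows "patch_profile p J d \<in> columns p J rep"
proof -
  let ?e = "\<lambda>j. rep (patch_profile p J d j)"
  have e_in_cell: "?e j \<in> cell_of p J (d j)" if "j < J" for j
    using rep in_patches that by (simp add: patch_profile_def)
  have "rationalizable p J ?e"
  proof (rule rationalizable_if_same_positions[OF pos rat])
    show "\<forall>j<J. ?e j \<in> budget p j"
      using e_in_cell in_patches by (auto simp: patches_def)
    show "\<forall>j<J. position p J (?e j) = position p J (d j)"
      using e_in_cell by (simp add: cell_of_def)
  qed
  then show ?thesis using in_patches by (simp add: columns_def patch_profile_def)
qed

lemma budget_in_borel: "budget p j \<in> sets borel"
proof -
  have "budget p j = {y \<in> space borel. (\<forall>k. 0 \<le> y $ k) \<and> p j \<bullet> y = 1}"
    by (auto simp: budget_def nonneg_orthant_def)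
  also have "\<dots> \<in> sets borel" by measurable
  finally show ?thesis .
qed

lemma cells_in_borel:
  assumes "C \<in> cells p J"
  shows "C \<in> sets borel"
proof -
  obtain y where "C = cell_of p J y" using assms by (auto simp: cells_eq_image_cell_of)
  then have "C = budget_union p J \<inter> {x \<in> space borel. \<forall>i<J. sgn (p i \<bullet> x - 1) = sgn (p i \<bullet> y - 1)}"
    by (auto simp: cell_of_def position_def fun_eq_iff)
  also have "\<dots> \<in> sets borel"
    unfolding budget_union_def using budget_in_borel by measurable
  finally show ?thesis .
qed

lemma multi_plane_part_in_borel: "multi_plane_part p J j \<in> sets borel"
  unfolding multi_plane_part_def
  using finite_cells[of p J] cells_in_borel by (intro sets.finite_Union) auto

section \<open>Demand distributions on patches\<close>

lemma stoch_demand_system_sets: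
  assumes "stoch_demand_system p J P" and "j < J"
  shows "A \<in> sets (P j) \<longleftrightarrow> A \<subseteq> budget p j \<and> A \<in> sets borel"
proof -
  have "sets (P j) = sets (restrict_space borel (budget p j))"
    using assms by (simp add: stoch_demand_system_def)
  moreover have "budget p j \<inter> space borel \<in> sets borel" using budget_in_borel by simp
  ultimately show ?thesis using sets_restrict_space_iff by blast
qed

lemma stoch_demand_system_space:
  assumes "stoch_demand_system p J P" and "j < J"
  shows "space (P j) = budget p j"
proof -
  have "space (P j) = space (restrict_space borel (budget p j))"
    using assms by (intro sets_eq_imp_space_eq) (simp add: stoch_demand_system_def)
  then show ?thesis by (simp add: space_restrict_space)
qed

lemma stoch_demand_system_prob_space:
  "stoch_demand_system p J P \<Longrightarrow> j < J \<Longrightarrow> prob_space (P j)"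
  by (simp add: stoch_demand_system_def)

lemma measure_multi_plane_part_eq_0:
  assumes sds: "stoch_demand_system p J P" and "j < J"
    and null: "\<forall>C \<in> cells p J. on_several_planes p J C \<and> C \<subseteq> budget p j \<longrightarrow> measure (P j) C = 0"
  shows "measure (P j) (multi_plane_part p J j) = 0"
proof -
  interpret prob_space "P j" using stoch_demand_system_prob_space[OF sds \<open>j < J\<close>] .
  let ?S = "{C \<in> cells p J. on_several_planes p J C \<and> C \<subseteq> budget p j}"
  have "measure (P j) (multi_plane_part p J j) = measure (P j) (\<Union>C\<in>?S. C)"
    by (simp add: multi_plane_part_def)
  also have "\<dots> \<le> (\<Sum>C\<in>?S. measure (P j) C)"
    using finite_cells[of p J] cells_in_borel stoch_demand_system_sets[OF sds \<open>j < J\<close>]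
    by (intro finite_measure_subadditive_finite) auto
  also have "\<dots> = 0" using null by simp
  finally show ?thesis by (simp add: measure_le_0_iff)
qed

lemma patches_in_sets:
  assumes "stoch_demand_system p J P" and "j < J" and "x \<in> patches p J j"
  shows "x \<in> sets (P j)"
  using assms cells_in_borel by (auto simp: stoch_demand_system_sets patches_def)

lemma multi_plane_part_in_sets:
  assumes "stoch_demand_system p J P" and "j < J"
  shows "multi_plane_part p J j \<in> sets (P j)"
  using assms multi_plane_part_in_borel
  by (auto simp: stoch_demand_system_sets multi_plane_part_def)

lemma budget_le_in_sets:
  assumes "stoch_demand_system p J P" and "j < J"
  shows "{y \<in> budget p j. y $ k \<le> z} \<in> sets (P j)"
proof -
  have "{y \<in> budget p j. y $ k \<le> z} = budget p j \<inter> {y \<in> space borel. y $ k \<le> z}" by auto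
  also have "\<dots> \<in> sets borel" using budget_in_borel by measurable
  finally show ?thesis using assms by (auto simp: stoch_demand_system_sets)
qed

lemma measure_Union_patches:
  assumes sds: "stoch_demand_system p J P" and "j < J" and "S \<subseteq> patches p J j"
  shows "measure (P j) (\<Union>S) = (\<Sum>x\<in>S. measure (P j) x)"
proof -
  interpret prob_space "P j" using stoch_demand_system_prob_space[OF sds \<open>j < J\<close>] .
  have "disjoint_family_on (\<lambda>x. x) S"
    using assms(3) cells_disjoint by (fastforce simp: disjoint_family_on_def patches_def)
  moreover have "finite S" using assms(3) finite_patches finite_subset by blast
  ultimately show ?thesis
    using assms(3) patches_in_sets[OF sds \<open>j < J\<close>]
    by (subst finite_measure_finite_Union[symmetric]) auto
qed

lemma sum_patches_below_le_measure:
  assumes sds: "stoch_demand_system p J P" and "j < J" and pos: "\<forall>g. 0 < p j $ g"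
  shows "(\<Sum>x \<in> {x \<in> patches p J j. Sup ((\<lambda>y. y $ k) ` x) \<le> z}. measure (P j) x)
           \<le> measure (P j) {y \<in> budget p j. y $ k \<le> z}"
proof -
  interpret prob_space "P j" using stoch_demand_system_prob_space[OF sds \<open>j < J\<close>] .
  let ?S = "{x \<in> patches p J j. Sup ((\<lambda>y. y $ k) ` x) \<le> z}"
  have "\<Union>?S \<subseteq> {y \<in> budget p j. y $ k \<le> z}"
  proof
    fix y assume "y \<in> \<Union>?S"
    then obtain x where x: "x \<in> ?S" "y \<in> x" by blast
    then have x_budget: "x \<subseteq> budget p j" by (simp add: patches_def)
    then have "bdd_above ((\<lambda>y. y $ k) ` x)"
      using budget_component_le[where p=p and j=j, OF pos] by (intro bdd_aboveI2) blast
    then have "y $ k \<le> Sup ((\<lambda>y. y $ k) ` x)" using x(2) by (intro cSup_upper) auto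
    then show "y \<in> {y \<in> budget p j. y $ k \<le> z}" using x x_budget by auto
  qed
  then have "measure (P j) (\<Union>?S) \<le> measure (P j) {y \<in> budget p j. y $ k \<le> z}"
    using budget_le_in_sets[OF sds \<open>j < J\<close>] by (intro finite_measure_mono) auto
  then show ?thesis using measure_Union_patches[OF sds \<open>j < J\<close>] by simp
qed

lemma measure_le_sum_patches_meeting:
  assumes sds: "stoch_demand_system p J P" and "j < J"
    and null: "measure (P j) (multi_plane_part p J j) = 0"
  shows "measure (P j) {y \<in> budget p j. y $ k \<le> z}
           \<le> (\<Sum>x \<in> {x \<in> patches p J j. Inf ((\<lambda>y. y $ k) ` x) \<le> z}. measure (P j) x)"
proof -
  interpret prob_space "P j" using stoch_demand_system_prob_space[OF sds \<open>j < J\<close>] .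
  let ?S = "{x \<in> patches p J j. Inf ((\<lambda>y. y $ k) ` x) \<le> z}"
  have "{y \<in> budget p j. y $ k \<le> z} \<subseteq> \<Union>?S \<union> multi_plane_part p J j"
  proof
    fix y assume y: "y \<in> {y \<in> budget p j. y $ k \<le> z}"
    show "y \<in> \<Union>?S \<union> multi_plane_part p J j"
    proof (rule ccontr)
      assume "y \<notin> \<Union>?S \<union> multi_plane_part p J j"
      moreover have patch: "cell_of p J y \<in> patches p J j"
        using cell_of_in_patches \<open>j < J\<close> y calculation by blast
      moreover have "y \<in> cell_of p J y"
        using budget_subset_budget_union \<open>j < J\<close> y by (blast intro: mem_cell_of_self)
      moreover have "bdd_below ((\<lambda>y. y $ k) ` cell_of p J y)"
        using patch unfolding patches_def budget_def nonneg_orthant_def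
        by (intro bdd_belowI2[where m=0]) auto
      ultimately have "Inf ((\<lambda>y. y $ k) ` cell_of p J y) \<le> y $ k"
        by (intro cInf_lower) auto
      with y have "Inf ((\<lambda>y. y $ k) ` cell_of p J y) \<le> z" by simp
      with patch \<open>y \<in> cell_of p J y\<close> \<open>y \<notin> \<Union>?S \<union> multi_plane_part p J j\<close> show False
        by blast
    qed
  qed
  moreover have "\<Union>?S \<in> sets (P j)"
    using finite_patches[of p J j] patches_in_sets[OF sds \<open>j < J\<close>] by (intro sets.finite_Union) auto
  moreover have "multi_plane_part p J j \<in> sets (P j)"
    using sds \<open>j < J\<close> by (rule multi_plane_part_in_sets)
  ultimately have "measure (P j) {y \<in> budget p j. y $ k \<le> z}
      \<le> measure (P j) (\<Union>?S) + measure (P j) (multi_plane_part p J j)"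
    by (intro order_trans[OF finite_measure_mono measure_Un_le]) auto
  then show ?thesis using null measure_Union_patches[OF sds \<open>j < J\<close>] by simp
qed

locale rationalizing_distribution = prob_space Q
  for Q :: "(nat \<Rightarrow> real^'g) measure" +
  fixes p :: "nat \<Rightarrow> real^'g" and J :: nat and P :: "nat \<Rightarrow> (real^'g) measure"
  assumes demand_system: "stoch_demand_system p J P"
    and sets_Q: "sets Q = sets (PiM {..<J} P)"
    and AE_rationalizable: "AE d in Q. rationalizable p J d"
    and marginals: "\<forall>j<J. distr Q (P j) (\<lambda>d. d j) = P j"
begin

lemma measurable_component: "j < J \<Longrightarrow> (\<lambda>d. d j) \<in> measurable Q (P j)"
  using measurable_component_singleton[of j "{..<J}" P]
  by (simp add: measurable_cong_sets[OF sets_Q refl])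

lemma component_in_budget: "j < J \<Longrightarrow> d \<in> space Q \<Longrightarrow> d j \<in> budget p j"
  using measurable_space[OF measurable_component] stoch_demand_system_space[OF demand_system]
  by blast

lemma measure_component_vimage:
  "j < J \<Longrightarrow> A \<in> sets (P j) \<Longrightarrow> measure Q ((\<lambda>d. d j) -` A \<inter> space Q) = measure (P j) A"
  using marginals measure_distr[OF measurable_component] by metis

lemma AE_cells_in_patches:
  assumes null: "\<forall>j<J. measure (P j) (multi_plane_part p J j) = 0"
  shows "AE d in Q. \<forall>j<J. cell_of p J (d j) \<in> patches p J j"
proof -
  have "AE d in Q. cell_of p J (d j) \<in> patches p J j" if "j < J" for j
  proof -
    let ?N = "(\<lambda>d. d j) -` multi_plane_part p J j \<inter> space Q"
    have mpp: "multi_plane_part p J j \<in> sets (P j)"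
      using demand_system that by (rule multi_plane_part_in_sets)
    then have "?N \<in> sets Q" using measurable_component[OF that] by measurable
    moreover have "measure Q ?N = 0"
      using measure_component_vimage[OF that mpp] null that by simp
    ultimately have "AE d in Q. d \<notin> ?N"
      by (intro AE_not_in) (simp add: emeasure_eq_measure null_sets_def)
    with AE_space show ?thesis
      by eventually_elim (use that component_in_budget cell_of_in_patches in blast)
  qed
  then have "AE d in Q. \<forall>j\<in>{..<J}. cell_of p J (d j) \<in> patches p J j"
    by (intro AE_finite_allI) auto
  then show ?thesis by eventually_elim simp
qed

lemma component_in_budget_union: "j < J \<Longrightarrow> d \<in> space Q \<Longrightarrow> d j \<in> budget_union p J"
  using component_in_budget budget_subset_budget_union by blast

definition profile_event :: "(nat \<Rightarrow> (real^'g) set) \<Rightarrow> (nat \<Rightarrow> real^'g) set" where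
  "profile_event c = {d \<in> space Q. patch_profile p J d = c}"

definition column_weight :: "((real^'g) set \<Rightarrow> real^'g) \<Rightarrow> (nat \<Rightarrow> (real^'g) set) \<Rightarrow> real" where
  "column_weight rep c = (if c \<in> columns p J rep then measure Q (profile_event c) else 0)"

lemma profile_event_in_sets:
  assumes c: "c \<in> columns p J rep"
  shows "profile_event c \<in> sets Q"
proof -
  have "profile_event c = {d \<in> space Q. \<forall>j\<in>{..<J}. d j \<in> c j}"
    using patch_profile_eq_iff[OF c] component_in_budget_union by (auto simp: profile_event_def)
  also have "\<dots> \<in> sets Q"
  proof (intro sets.sets_Collect_finite_All)
    fix j assume "j \<in> {..<J}"
    then have "j < J" by simp
    then have "c j \<in> sets (P j)"
      using c patches_in_sets[OF demand_system] by (auto simp: columns_def)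
    then have "(\<lambda>d. d j) -` c j \<inter> space Q \<in> sets Q"
      using measurable_component[OF \<open>j < J\<close>] by (rule measurable_sets[rotated])
    moreover have "{d \<in> space Q. d j \<in> c j} = (\<lambda>d. d j) -` c j \<inter> space Q" by auto
    ultimately show "{d \<in> space Q. d j \<in> c j} \<in> sets Q" by simp
  qed simp
  finally show ?thesis .
qed

lemma AE_patch_profile_in_columns:
  assumes "\<forall>j<J. \<forall>g. 0 < p j $ g" and "\<forall>j<J. \<forall>x \<in> patches p J j. rep x \<in> x"
    and "\<forall>j<J. measure (P j) (multi_plane_part p J j) = 0"
  shows "AE d in Q. patch_profile p J d \<in> columns p J rep"
  using AE_rationalizable AE_cells_in_patches[OF assms(3)]
  by eventually_elim (rule patch_profile_in_columns[OF assms(1,2)])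

lemma A_times_column_weight:
  assumes pos: "\<forall>j<J. \<forall>g. 0 < p j $ g" and rep: "\<forall>j<J. \<forall>x \<in> patches p J j. rep x \<in> x"
    and null: "\<forall>j<J. measure (P j) (multi_plane_part p J j) = 0"
    and j: "j < J" and x: "x \<in> patches p J j"
  shows "A_times (columns p J rep) (column_weight rep) j x = measure (P j) x"
proof -
  let ?S = "{c \<in> columns p J rep. c j = x}"
  have "A_times (columns p J rep) (column_weight rep) j x = (\<Sum>c\<in>?S. measure Q (profile_event c))"
    by (simp add: A_times_def column_weight_def)
  also have "\<dots> = measure Q (\<Union>c\<in>?S. profile_event c)"
    using finite_columns[of p J rep] profile_event_in_sets
    by (intro finite_measure_finite_Union[symmetric])
      (auto simp: disjoint_family_on_def profile_event_def)
  also have "\<dots> = measure Q ((\<lambda>d. d j) -` x \<inter> space Q)"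
  proof (rule measure_eq_AE)
    have x_cell: "x \<in> cells p J" using x by (simp add: patches_def)
    from AE_space AE_patch_profile_in_columns[OF pos rep null]
    show "AE d in Q. d \<in> (\<Union>c\<in>?S. profile_event c) \<longleftrightarrow> d \<in> (\<lambda>d. d j) -` x \<inter> space Q"
      by eventually_elim (use j x_cell component_in_budget_union in
          \<open>auto simp: profile_event_def patch_profile_def cell_of_eq_iff_mem\<close>)
    show "(\<Union>c\<in>?S. profile_event c) \<in> sets Q"
      using finite_columns[of p J rep] profile_event_in_sets by auto
    show "(\<lambda>d. d j) -` x \<inter> space Q \<in> sets Q"
      using measurable_component[OF j] patches_in_sets[OF demand_system j x] by measurable
  qed
  also have "\<dots> = measure (P j) x"
    using measure_component_vimage[OF j patches_in_sets[OF demand_system j x]] .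
  finally show ?thesis .
qed

lemma column_weight_feasible:
  assumes "\<forall>j<J. \<forall>g. 0 < p j $ g" and "\<forall>j<J. \<forall>x \<in> patches p J j. rep x \<in> x"
    and "\<forall>j<J. measure (P j) (multi_plane_part p J j) = 0"
  shows "column_weight rep \<in> feasible p J P rep"
  using A_times_column_weight[OF assms] by (auto simp: feasible_def column_weight_def)

end

theorem corollary3:
  fixes p :: "nat \<Rightarrow> real^'g" and J :: nat and P :: "nat \<Rightarrow> (real^'g) measure"
    and rep :: "(real^'g) set \<Rightarrow> real^'g" and k :: 'g and z :: real
  assumes "0 < J"
    and "\<forall>j<J. \<forall>g. 0 < p j $ g"
    and "\<forall>j<J. \<forall>x \<in> patches p J j. rep x \<in> x"
    and "stoch_rationalizable p J P"
    and "\<forall>C \<in> cells p J. \<forall>j<J. on_several_planes p J C \<and> C \<subseteq> budget p j \<longrightarrow> measure (P j) C = 0"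
    and "0 \<le> z"
  shows "(INF \<nu> \<in> feasible p J P rep.
            ereal (\<Sum>x \<in> {x \<in> patches p J (J - 1). Sup ((\<lambda>y. y $ k) ` x) \<le> z}.
                     A_times (columns p J rep) \<nu> (J - 1) x))
           \<le> ereal (measure (P (J - 1)) {y \<in> budget p (J - 1). y $ k \<le> z})
       \<and> ereal (measure (P (J - 1)) {y \<in> budget p (J - 1). y $ k \<le> z})
           \<le> (SUP \<nu> \<in> feasible p J P rep.
            ereal (\<Sum>x \<in> {x \<in> patches p J (J - 1). Inf ((\<lambda>y. y $ k) ` x) \<le> z}.
                     A_times (columns p J rep) \<nu> (J - 1) x))"
proof -
  obtain Q where "rationalizing_distribution Q p J P"
    using assms(4) unfolding stoch_rationalizable_def rationalizing_distribution_def
      rationalizing_distribution_axioms_def by blast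
  then interpret rationalizing_distribution Q p J P .
  have null: "\<forall>j<J. measure (P j) (multi_plane_part p J j) = 0"
    using measure_multi_plane_part_eq_0[OF demand_system] assms(5) by blast
  let ?\<nu> = "column_weight rep"
  have feasible: "?\<nu> \<in> feasible p J P rep"
    using column_weight_feasible[OF assms(2,3) null] .
  define L where "L = J - 1"
  have "L < J" using \<open>0 < J\<close> by (simp add: L_def)
  have sum_eq: "(\<Sum>x\<in>S. A_times (columns p J rep) ?\<nu> L x) = (\<Sum>x\<in>S. measure (P L) x)"
    if "S \<subseteq> patches p J L" for S
    using that A_times_column_weight[OF assms(2,3) null \<open>L < J\<close>] by (intro sum.cong) auto
  have "(\<Sum>x \<in> {x \<in> patches p J L. Sup ((\<lambda>y. y $ k) ` x) \<le> z}. A_times (columns p J rep) ?\<nu> L x)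
      \<le> measure (P L) {y \<in> budget p L. y $ k \<le> z}"
    using sum_patches_below_le_measure[OF demand_system \<open>L < J\<close>] assms(2) \<open>L < J\<close>
    by (subst sum_eq) auto
  moreover have "measure (P L) {y \<in> budget p L. y $ k \<le> z}
      \<le> (\<Sum>x \<in> {x \<in> patches p J L. Inf ((\<lambda>y. y $ k) ` x) \<le> z}. A_times (columns p J rep) ?\<nu> L x)"
    using measure_le_sum_patches_meeting[OF demand_system \<open>L < J\<close>] null \<open>L < J\<close>
    by (subst sum_eq) auto
  ultimately show ?thesis
    unfolding L_def[symmetric] by (intro conjI INF_lower2[OF feasible] SUP_upper2[OF feasible]) simp_all
qed

end
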